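(* Let $F$ be a field of characteristic zero, let $\mathcal{Z}=\langle z\rangle$ be the infinite cyclic group, and let $\mathfrak{S}$ be a Schur ring over $\mathcal{Z}$. If $C\in\mathcal{D}(\mathfrak{S})$ is a primitive set with $z\in C$, then $C=\{z\}$ or $C=\{z,z^{-1}\}$.
   Context: For finite $C\subseteq G$, $\overline{C}=\sum_{g\in C}g\in F[G]$ and $C^*=\{g^{-1}\mid g\in C\}$. A Schur ring over a group $G$ is an $F$-subspace $\mathfrak{S}=\operatorname{Span}_F\{\overline{C}\mid C\in\mathcal{D}(\mathfrak{S})\}$ of $F[G]$ where $\mathcal{D}(\mathfrak{S})$ is a partition of $G$ into finite sets (the primitive sets) such that (i) $\{1\}\in\mathcal{D}(\mathfrak{S})$; (ii) $C\in\mathcal{D}(\mathfrak{S})\Rightarrow C^*\in\mathcal{D}(\mathfrak{S})$; (iii) for all $C,D\in\mathcal{D}(\mathfrak{S})$, $\overline{C}\,\overline{D}=\sum_{E}\lambda_{CDE}\overline{E}$ with finitely many nonzero $\lambda_{CDE}\in F$. *)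

theory Defs
  imports Main
begin

text \<open>The infinite cyclic group Z = <z> is modelled additively by the type int:
  the generator z is 1, z^{-1} is -1, and the group product is +.
  An element of the group algebra F[Z] is a finitely supported function int => F;
  for a finite set C, its class sum is the indicator function of C.\<close>

definition class_sum :: "int set \<Rightarrow> int \<Rightarrow> 'a::field" where
  "class_sum C = (\<lambda>g. if g \<in> C then 1 else 0)"

definition class_prod :: "int set \<Rightarrow> int set \<Rightarrow> int \<Rightarrow> 'a::field" where
  "class_prod C D = (\<lambda>g. of_nat (card {(c, d). c \<in> C \<and> d \<in> D \<and> c + d = g}))"

definition schur_partition :: "'a::field itself \<Rightarrow> int set set \<Rightarrow> bool" where
  "schur_partition (_ :: 'a itself) \<D> \<longleftrightarrow>
     (\<forall>C\<in>\<D>. C \<noteq> {} \<and> finite C) \<and>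
     \<Union>\<D> = UNIV \<and>
     (\<forall>C\<in>\<D>. \<forall>D\<in>\<D>. C \<noteq> D \<longrightarrow> C \<inter> D = {}) \<and>
     {0} \<in> \<D> \<and>
     (\<forall>C\<in>\<D>. uminus ` C \<in> \<D>) \<and>
     (\<forall>C\<in>\<D>. \<forall>D\<in>\<D>. \<exists>lam :: int set \<Rightarrow> 'a.
         finite {E \<in> \<D>. lam E \<noteq> 0} \<and>
         (class_prod C D :: int \<Rightarrow> 'a) =
           (\<lambda>g. \<Sum>E\<in>{E \<in> \<D>. lam E \<noteq> 0}. lam E * class_sum E g))"

end

theory Submission
  imports Defs "HOL-Library.Multiset"
begin

text \<open>In characteristic zero the S-ring axioms say that the number of ways of writing g as
  a sum of an element of X and one of Y, and hence as a sum of k elements of X, is constant on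
  primitive sets. For a primitive set X with maximum t, the element k t has exactly one such
  representation, so part(k t) consists of multiples k c with c \<in> X. Comparing part(k t) with
  part((k - 1) t) shows that k x \<in> part(k t) for every x \<in> X once k exceeds the diameter of X;
  an interior point x would then give k x a unique representation, although it has two.
  Hence X \<subseteq> {min X, max X}. If the part of 1 is {1, c} with c \<noteq> \<plusminus>1, then 1 + c is the only
  sum with two representations, so {\<bar>1 + c\<bar>} and all its multiples are parts; but a large
  multiple K of it must share its part with K c.\<close>

definition pair_count :: "int set \<Rightarrow> int set \<Rightarrow> int \<Rightarrow> nat" where
  "pair_count X Y g = card {(x, y). x \<in> X \<and> y \<in> Y \<and> x + y = g}"

definition tuples_summing_to :: "int set \<Rightarrow> nat \<Rightarrow> int \<Rightarrow> int list set" where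
  "tuples_summing_to X k g = {xs. set xs \<subseteq> X \<and> length xs = k \<and> sum_list xs = g}"

text \<open>The coefficient of g in the k-th power of the class sum of X.\<close>
definition tuple_count :: "int set \<Rightarrow> nat \<Rightarrow> int \<Rightarrow> nat" where
  "tuple_count X k g = card (tuples_summing_to X k g)"

lemma card_diff_mem_eq_pair_count:
  "card {y \<in> Y. g - y \<in> X} = pair_count X Y g"
proof -
  have "bij_betw (\<lambda>y. (g - y, y)) {y \<in> Y. g - y \<in> X} {(x, y). x \<in> X \<and> y \<in> Y \<and> x + y = g}"
    by (rule bij_betw_byWitness[where f' = snd]) auto
  then show ?thesis
    unfolding pair_count_def by (rule bij_betw_same_card)
qed

lemma finite_tuples_summing_to:
  "finite X \<Longrightarrow> finite (tuples_summing_to X k g)"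
  unfolding tuples_summing_to_def
  by (rule finite_subset[OF _ finite_lists_length_eq[of X k]]) auto

lemma tuple_count_0: "tuple_count X 0 g = (if g = 0 then 1 else 0)"
proof -
  have "tuples_summing_to X 0 g = (if g = 0 then {[]} else {})"
    by (auto simp: tuples_summing_to_def)
  then show ?thesis by (simp add: tuple_count_def)
qed

lemma tuple_count_Suc:
  assumes "finite X"
  shows "tuple_count X (Suc k) g = (\<Sum>y\<in>X. tuple_count X k (g - y))"
proof -
  have "tuples_summing_to X (Suc k) g = (\<Union>y\<in>X. (#) y ` tuples_summing_to X k (g - y))"
    unfolding tuples_summing_to_def by (auto simp: length_Suc_conv)
  then have "tuple_count X (Suc k) g = card (\<Union>y\<in>X. (#) y ` tuples_summing_to X k (g - y))"
    by (simp add: tuple_count_def)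
  also have "\<dots> = (\<Sum>y\<in>X. card ((#) y ` tuples_summing_to X k (g - y)))"
    using assms by (intro card_UN_disjoint) (auto intro: finite_tuples_summing_to)
  also have "\<dots> = (\<Sum>y\<in>X. tuple_count X k (g - y))"
    by (simp add: card_image tuple_count_def)
  finally show ?thesis .
qed

lemma sum_list_eq_length_mult_imp_replicate:
  fixes xs :: "int list"
  assumes "\<forall>x\<in>set xs. x \<le> t" "sum_list xs = int (length xs) * t"
  shows "xs = replicate (length xs) t"
  using assms
proof (induction xs)
  case (Cons a xs)
  have "sum_list xs \<le> int (length xs) * t"
    using Cons.prems(1) sum_list_mono[of xs id "\<lambda>_. t"] by (simp add: sum_list_triv)
  with Cons.prems have "a = t" "sum_list xs = int (length xs) * t"
    by (auto simp: algebra_simps)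
  with Cons show ?case by simp
qed simp

lemma tuple_count_Max:
  assumes "finite X" "X \<noteq> {}"
  shows "tuple_count X k (int k * Max X) = 1"
proof -
  have "tuples_summing_to X k (int k * Max X) = {replicate k (Max X)}"
  proof (intro set_eqI iffI)
    fix xs assume "xs \<in> tuples_summing_to X k (int k * Max X)"
    then have xs: "set xs \<subseteq> X" "length xs = k" "sum_list xs = int k * Max X"
      by (simp_all add: tuples_summing_to_def)
    then have "\<forall>x\<in>set xs. x \<le> Max X"
      using assms(1) by auto
    with xs have "xs = replicate (length xs) (Max X)"
      by (intro sum_list_eq_length_mult_imp_replicate) simp_all
    with xs(2) show "xs \<in> {replicate k (Max X)}"
      by simp
  qed (use assms in \<open>simp add: tuples_summing_to_def sum_list_replicate set_replicate_conv_if\<close>)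
  then show ?thesis by (simp add: tuple_count_def)
qed

text \<open>A tuple that is the only one with its length and sum equals all its rearrangements,
  so it is constant.\<close>
lemma tuple_count_eq_1_imp_multiple:
  assumes "tuple_count X k g = 1" "k \<ge> 1"
  obtains c where "c \<in> X" "g = int k * c"
proof -
  obtain xs where xs: "tuples_summing_to X k g = {xs}"
    using assms(1) unfolding tuple_count_def by (rule card_1_singletonE)
  then have xs_in: "set xs \<subseteq> X" "length xs = k" "sum_list xs = g"
    unfolding tuples_summing_to_def by blast+
  have "a = hd xs" if "a \<in> set xs" for a
  proof -
    have perm: "mset (a # remove1 a xs) = mset xs"
      using that by simp
    have "set (a # remove1 a xs) = set xs" "length (a # remove1 a xs) = length xs"
      "sum_list (a # remove1 a xs) = sum_list xs"
      using mset_eq_setD[OF perm] mset_eq_length[OF perm] arg_cong[OF perm, of sum_mset]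
      by (simp_all only: sum_mset_sum_list)
    then have "a # remove1 a xs \<in> tuples_summing_to X k g"
      unfolding tuples_summing_to_def mem_Collect_eq by (simp only: xs_in simp_thms)
    with xs have "a # remove1 a xs = xs"
      by blast
    from arg_cong[OF this, of hd] show ?thesis
      by (simp only: list.sel(1))
  qed
  then have "replicate k (hd xs) = xs"
    unfolding xs_in(2)[symmetric] by (intro replicate_length_same) blast
  then have "g = int k * hd xs"
    using xs_in(3) sum_list_replicate[of k "hd xs"] by simp
  moreover have "hd xs \<in> X"
    using xs_in assms(2) by (cases xs) auto
  ultimately show thesis
    by (rule that[rotated])
qed

lemma tuple_count_interior_ge_2:
  assumes "finite X" "s \<in> X" "x \<in> X" "t \<in> X" "s < x" "x < t"
    and "k > 0" "(t - s) dvd int k"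
  shows "tuple_count X k (int k * x) \<ge> 2"
proof -
  obtain n where n: "int k = (t - s) * n"
    using assms(8) by blast
  then have "n > 0"
    using assms(5-7) zero_less_mult_pos[of "t - s" n] by simp
  define j where "j = nat (n * (x - s))"
  have j_int: "int j = n * (x - s)"
    using \<open>n > 0\<close> assms(5) by (simp add: j_def)
  have "0 < n * (x - s)" "n * (x - s) < n * (t - s)"
    using \<open>n > 0\<close> assms(5,6) by simp_all
  then have j: "0 < j" "j < k"
    using j_int n by (simp_all only: of_nat_less_iff[symmetric] mult.commute of_nat_0)
  have k_minus_j: "int (k - j) = n * (t - x)"
    using j(2) j_int n by (simp add: of_nat_diff algebra_simps)
  define const_tuple where "const_tuple = replicate k x"
  define extreme_tuple where "extreme_tuple = replicate j t @ replicate (k - j) s"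
  have "sum_list extreme_tuple = int j * t + int (k - j) * s"
    by (simp add: extreme_tuple_def sum_list_replicate)
  also have "\<dots> = n * (x - s) * t + n * (t - x) * s"
    by (simp only: j_int k_minus_j)
  also have "\<dots> = int k * x"
    by (simp only: n) algebra
  finally have "sum_list extreme_tuple = int k * x" .
  then have "extreme_tuple \<in> tuples_summing_to X k (int k * x)"
    using assms(2,4) j(2) by (auto simp: extreme_tuple_def tuples_summing_to_def)
  moreover have "const_tuple \<in> tuples_summing_to X k (int k * x)"
    using assms(3) by (auto simp: const_tuple_def tuples_summing_to_def sum_list_replicate)
  moreover have "const_tuple \<noteq> extreme_tuple"
  proof
    assume "const_tuple = extreme_tuple"
    then have "const_tuple ! 0 = extreme_tuple ! 0" by simp
    then show False
      using j(1,2) assms(6) by (simp add: const_tuple_def extreme_tuple_def nth_append)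
  qed
  ultimately have "card {const_tuple, extreme_tuple} \<le> tuple_count X k (int k * x)"
    unfolding tuple_count_def by (intro card_mono finite_tuples_summing_to assms(1)) auto
  then show ?thesis
    using \<open>const_tuple \<noteq> extreme_tuple\<close> by simp
qed

lemma pair_count_pos_iff:
  assumes "finite X" "finite Y"
  shows "0 < pair_count X Y g \<longleftrightarrow> (\<exists>x\<in>X. \<exists>y\<in>Y. x + y = g)"
proof -
  have "finite {(x, y). x \<in> X \<and> y \<in> Y \<and> x + y = g}"
    by (rule finite_subset[of _ "X \<times> Y"]) (use assms in auto)
  then show ?thesis
    unfolding pair_count_def by (auto simp: card_gt_0_iff)
qed

definition constant_on_parts :: "'a set set \<Rightarrow> ('a \<Rightarrow> 'b) \<Rightarrow> bool" where
  "constant_on_parts P f \<longleftrightarrow> (\<forall>X\<in>P. \<forall>x\<in>X. \<forall>y\<in>X. f x = f y)"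

locale int_schur_partition =
  fixes D :: "int set set"
  assumes finite_part: "X \<in> D \<Longrightarrow> finite X"
    and nonempty_part: "X \<in> D \<Longrightarrow> X \<noteq> {}"
    and covers: "\<Union>D = UNIV"
    and disjoint_parts: "X \<in> D \<Longrightarrow> Y \<in> D \<Longrightarrow> X \<noteq> Y \<Longrightarrow> X \<inter> Y = {}"
    and zero_part: "{0} \<in> D"
    and uminus_part: "X \<in> D \<Longrightarrow> uminus ` X \<in> D"
    and pair_count_constant: "X \<in> D \<Longrightarrow> Y \<in> D \<Longrightarrow> constant_on_parts D (pair_count X Y)"
begin

definition part :: "int \<Rightarrow> int set" where
  "part g = (THE X. X \<in> D \<and> g \<in> X)"

lemma part_unique: "X \<in> D \<Longrightarrow> g \<in> X \<Longrightarrow> Y \<in> D \<Longrightarrow> g \<in> Y \<Longrightarrow> X = Y"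
  using disjoint_parts by blast

lemma part_eq: "X \<in> D \<Longrightarrow> g \<in> X \<Longrightarrow> part g = X"
  unfolding part_def by (rule the_equality) (auto dest: part_unique)

lemma part_in: "part g \<in> D" and in_part: "g \<in> part g"
proof -
  obtain X where "X \<in> D" "g \<in> X"
    using covers by blast
  then show "part g \<in> D" "g \<in> part g"
    using part_eq by simp_all
qed

lemma constant_on_partsD: "constant_on_parts D f \<Longrightarrow> g' \<in> part g \<Longrightarrow> f g' = f g"
  unfolding constant_on_parts_def using part_in in_part by blast

lemma constant_on_parts_expansion:
  fixes f :: "int \<Rightarrow> 'b::comm_monoid_add"
  assumes f: "constant_on_parts D f" and support: "finite {z. f z \<noteq> 0}"
  obtains \<W> val where "finite \<W>" "\<W> \<subseteq> D" "\<And>z. f z = (\<Sum>W\<in>\<W>. if z \<in> W then val W else 0)"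
proof
  define \<W> where "\<W> = part ` {z. f z \<noteq> 0}"
  define val where "val W = f (SOME z. z \<in> W)" for W
  show \<W>: "finite \<W>" "\<W> \<subseteq> D"
    using support part_in by (auto simp: \<W>_def)
  have val_part: "val (part z) = f z" for z
    unfolding val_def using constant_on_partsD[OF f] someI[of "\<lambda>z'. z' \<in> part z", OF in_part]
    by blast
  fix z
  have "(\<Sum>W\<in>\<W>. if z \<in> W then val W else 0) = (\<Sum>W\<in>\<W>. if W = part z then val W else 0)"
    using \<W>(2) part_eq in_part by (intro sum.cong) auto
  also have "\<dots> = (if part z \<in> \<W> then f z else 0)"
    using \<W>(1) val_part by simp
  also have "\<dots> = f z"
    by (auto simp: \<W>_def)
  finally show "f z = (\<Sum>W\<in>\<W>. if z \<in> W then val W else 0)" ..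
qed

lemma convolution_constant_on_parts:
  fixes f :: "int \<Rightarrow> nat"
  assumes f: "constant_on_parts D f" and support: "finite {z. f z \<noteq> 0}" and Y: "Y \<in> D"
  shows "constant_on_parts D (\<lambda>g. \<Sum>y\<in>Y. f (g - y))"
proof -
  obtain \<W> val where \<W>: "finite \<W>" "\<W> \<subseteq> D"
    and f_expand: "\<And>z. f z = (\<Sum>W\<in>\<W>. if z \<in> W then val W else 0)"
    using constant_on_parts_expansion[OF f support] by blast
  have convolution_expand: "(\<Sum>y\<in>Y. f (g - y)) = (\<Sum>W\<in>\<W>. val W * pair_count W Y g)" for g
  proof -
    have "(\<Sum>y\<in>Y. f (g - y)) = (\<Sum>W\<in>\<W>. \<Sum>y\<in>Y. if g - y \<in> W then val W else 0)"
      by (subst f_expand) (rule sum.swap)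
    also have "\<dots> = (\<Sum>W\<in>\<W>. val W * card {y \<in> Y. g - y \<in> W})"
      using finite_part[OF Y] by (simp add: sum.inter_filter[symmetric] mult.commute)
    finally show ?thesis
      by (simp add: card_diff_mem_eq_pair_count)
  qed
  show ?thesis
    unfolding constant_on_parts_def
  proof (intro ballI)
    fix Z g g' assume "Z \<in> D" "g \<in> Z" "g' \<in> Z"
    then have "pair_count W Y g = pair_count W Y g'" if "W \<in> \<W>" for W
      using pair_count_constant[OF subsetD[OF \<W>(2) that] Y] unfolding constant_on_parts_def
      by blast
    then show "(\<Sum>y\<in>Y. f (g - y)) = (\<Sum>y\<in>Y. f (g' - y))"
      unfolding convolution_expand by simp
  qed
qed

lemma tuple_count_constant:
  assumes "X \<in> D"
  shows "constant_on_parts D (tuple_count X k)"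
proof (induction k)
  case 0
  show ?case
    unfolding constant_on_parts_def tuple_count_0
  proof (intro ballI)
    fix Z g g' assume "Z \<in> D" "g \<in> Z" "g' \<in> Z"
    then have "g = 0 \<longleftrightarrow> g' = 0"
      using part_unique[OF _ _ zero_part] by blast
    then show "(if g = 0 then 1 else 0) = (if g' = 0 then 1 else 0)"
      by simp
  qed
next
  case (Suc k)
  have "{z. tuple_count X k z \<noteq> 0} \<subseteq> sum_list ` {xs. set xs \<subseteq> X \<and> length xs = k}"
  proof
    fix z assume "z \<in> {z. tuple_count X k z \<noteq> 0}"
    then have "tuples_summing_to X k z \<noteq> {}"
      unfolding tuple_count_def by (metis card.empty mem_Collect_eq)
    then obtain xs where "xs \<in> tuples_summing_to X k z"
      by blast
    then show "z \<in> sum_list ` {xs. set xs \<subseteq> X \<and> length xs = k}"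
      by (auto simp: tuples_summing_to_def)
  qed
  then have "finite {z. tuple_count X k z \<noteq> 0}"
    by (rule finite_subset[OF _ finite_imageI[OF finite_lists_length_eq[OF finite_part[OF assms]]]])
  moreover have "tuple_count X (Suc k) = (\<lambda>g. \<Sum>y\<in>X. tuple_count X k (g - y))"
    using tuple_count_Suc[OF finite_part[OF assms]] by (rule ext)
  ultimately show ?case
    using convolution_constant_on_parts[OF Suc.IH _ assms] by (simp only:)
qed

lemma mem_part_dilate_Max:
  assumes "X \<in> D" "k \<ge> 1" "p \<in> part (int k * Max X)"
  obtains c where "c \<in> X" "p = int k * c"
proof -
  have "tuple_count X k p = tuple_count X k (int k * Max X)"
    using constant_on_partsD[OF tuple_count_constant[OF assms(1)] assms(3)] .
  also have "\<dots> = 1"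
    using assms(1) finite_part nonempty_part by (intro tuple_count_Max)
  finally show thesis
    using tuple_count_eq_1_imp_multiple assms(2) that by blast
qed

lemma part_dilate_Suc_diff:
  assumes "X \<in> D" "x \<in> X"
  obtains p q where "p \<in> part (int (Suc k) * Max X)" "q \<in> part (int k * Max X)" "p - q = x"
proof -
  define t where "t = Max X"
  define B where "B = part (int (Suc k) * t)"
  define B' where "B' = part (int k * t)"
  have t: "t \<in> X"
    using assms finite_part nonempty_part by (simp add: t_def)
  have fin: "finite B" "finite (uminus ` B')"
    unfolding B_def B'_def using finite_part part_in by simp_all
  have "int (Suc k) * t + - (int k * t) = t"
    by (simp add: algebra_simps)
  moreover have "int (Suc k) * t \<in> B" "- (int k * t) \<in> uminus ` B'"
    unfolding B_def B'_def using in_part by simp_all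
  ultimately have "0 < pair_count B (uminus ` B') t"
    unfolding pair_count_pos_iff[OF fin] by blast
  moreover have "pair_count B (uminus ` B') x = pair_count B (uminus ` B') t"
    using pair_count_constant[OF part_in uminus_part[OF part_in]] assms t
    unfolding B_def B'_def constant_on_parts_def by blast
  ultimately have "0 < pair_count B (uminus ` B') x"
    by simp
  then obtain p q where "p \<in> B" "q \<in> B'" "p + - q = x"
    unfolding pair_count_pos_iff[OF fin] by blast
  then show thesis
    using that unfolding B_def B'_def t_def by simp
qed

text \<open>Write x = p - q with p = k c \<in> part(k Max X) and q = (k - 1) d \<in> part((k - 1) Max X),
  where c, d \<in> X. Then k (c - d) = x - d is smaller than k in absolute value, so c = d = x.\<close>
lemma part_dilate_eq_part_dilate_Max:
  assumes X: "X \<in> D" "x \<in> X" and k: "int k > Max X - Min X"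
  shows "part (int k * x) = part (int k * Max X)"
proof (cases "k = 1")
  case True
  then show ?thesis
    using X finite_part nonempty_part part_eq by simp
next
  case False
  have bounds: "Min X \<le> y \<and> y \<le> Max X" if "y \<in> X" for y
    using X finite_part that by simp
  have "k \<ge> 2"
    using False k bounds[OF X(2)] by linarith
  define j where "j = k - 1"
  have j: "k = Suc j" "j \<ge> 1"
    using \<open>k \<ge> 2\<close> by (simp_all add: j_def)
  obtain p q where pq: "p \<in> part (int k * Max X)" "q \<in> part (int j * Max X)" "p - q = x"
    using part_dilate_Suc_diff[OF X, of j] j(1) by blast
  obtain c where c: "c \<in> X" "p = int k * c"
    using mem_part_dilate_Max[OF X(1) _ pq(1)] j(1) by auto
  obtain d where d: "d \<in> X" "q = int j * d"
    using mem_part_dilate_Max[OF X(1) j(2) pq(2)] by blast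
  have "int k * (c - d) = x - d"
    using pq(3) c(2) d(2) j(1) by (simp add: algebra_simps)
  then have "int k * \<bar>c - d\<bar> = \<bar>x - d\<bar>"
    by (metis abs_mult abs_of_nat)
  also have "\<dots> < int k * 1"
    using bounds[OF X(2)] bounds[OF d(1)] k by linarith
  finally have "\<bar>c - d\<bar> < 1"
    using j(1) by (subst (asm) mult_less_cancel_left_pos) simp_all
  then have "p = int k * x"
    using \<open>int k * (c - d) = x - d\<close> c(2) by simp
  then show ?thesis
    using pq(1) part_eq part_in by metis
qed

lemma part_subset_Min_Max:
  assumes "X \<in> D"
  shows "X \<subseteq> {Min X, Max X}"
proof
  fix x assume x: "x \<in> X"
  have fin: "finite X" "X \<noteq> {}"
    using assms finite_part nonempty_part by simp_all
  show "x \<in> {Min X, Max X}"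
  proof (rule ccontr)
    assume "x \<notin> {Min X, Max X}"
    then have interior: "Min X < x" "x < Max X"
      using x fin by (auto simp: order_less_le)
    define k where "k = 2 * nat (Max X - Min X)"
    have k: "int k = 2 * (Max X - Min X)" "k > 0"
      using interior by (simp_all add: k_def)
    have "int k > Max X - Min X"
      using k interior by simp
    then have "int k * x \<in> part (int k * Max X)"
      using part_dilate_eq_part_dilate_Max[OF assms x] in_part by metis
    then have "tuple_count X k (int k * x) = tuple_count X k (int k * Max X)"
      by (rule constant_on_partsD[OF tuple_count_constant[OF assms]])
    also have "\<dots> = 1"
      using fin by (rule tuple_count_Max)
    finally have "tuple_count X k (int k * x) = 1" .
    moreover have "tuple_count X k (int k * x) \<ge> 2"
      using dvd_triv_right[of "Max X - Min X" 2] unfolding k(1)[symmetric]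
      by (rule tuple_count_interior_ge_2[OF fin(1) Min_in[OF fin] x Max_in[OF fin] interior k(2)])
    ultimately show False
      by simp
  qed
qed

lemma singleton_part_dilate:
  assumes "{m} \<in> D" "k \<ge> 1"
  shows "{int k * m} \<in> D"
proof -
  have "p = int k * m" if "p \<in> part (int k * m)" for p
  proof -
    have "p \<in> part (int k * Max {m})"
      using that by simp
    then obtain c where "c \<in> {m}" "p = int k * c"
      by (rule mem_part_dilate_Max[OF assms])
    then show ?thesis
      by simp
  qed
  then have "part (int k * m) = {int k * m}"
    using in_part by blast
  then show ?thesis
    using part_in by metis
qed

lemma singleton_part_sum:
  assumes ab: "{a, b} \<in> D" "a \<noteq> b"
  shows "{a + b} \<in> D"
proof -
  have "{(x, y). x \<in> {a, b} \<and> y \<in> {a, b} \<and> x + y = a + b} = {(a, b), (b, a)}"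
    using ab(2) by auto
  then have count_ab: "pair_count {a, b} {a, b} (a + b) = 2"
    using ab(2) by (simp add: pair_count_def)
  have "g = a + b" if "g \<in> part (a + b)" for g
  proof (rule ccontr)
    assume "g \<noteq> a + b"
    define S where "S = {(x, y). x \<in> {a, b} \<and> y \<in> {a, b} \<and> x + y = g}"
    have "finite S"
      by (rule finite_subset[of _ "{a, b} \<times> {a, b}"]) (auto simp: S_def)
    moreover have "\<forall>p\<in>S. \<forall>q\<in>S. p = q"
      using \<open>g \<noteq> a + b\<close> by (auto simp: S_def)
    ultimately have "pair_count {a, b} {a, b} g \<le> 1"
      unfolding pair_count_def S_def[symmetric] by (simp add: card_le_Suc0_iff_eq)
    moreover have "pair_count {a, b} {a, b} g = pair_count {a, b} {a, b} (a + b)"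
      using constant_on_partsD[OF pair_count_constant[OF ab(1) ab(1)] that] .
    ultimately show False
      using count_ab by simp
  qed
  then have "part (a + b) = {a + b}"
    using in_part by blast
  then show ?thesis
    using part_in by metis
qed

lemma part_eq_pair:
  assumes "X \<in> D" "x \<in> X"
  obtains y where "X = {x, y}"
proof -
  have "Min X \<in> X" "Max X \<in> X"
    using finite_part[OF assms(1)] nonempty_part[OF assms(1)] by simp_all
  then have "X = {Min X, Max X}"
    using part_subset_Min_Max[OF assms(1)] by blast
  then show thesis
    using assms(2) that by (metis insert_commute insertE singletonD)
qed

lemma abs_singleton_part:
  assumes "{a} \<in> D"
  shows "{\<bar>a\<bar>} \<in> D"
proof (cases "a \<ge> 0")
  case True
  then show ?thesis
    using assms by simp
next
  case False
  then show ?thesis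
    using uminus_part[OF assms] by simp
qed

lemma part_eq_singleton_of_pos_singleton:
  assumes m: "{m} \<in> D" "m > 0" and X: "X \<in> D" "x \<in> X" "x > 0"
  shows "X = {x}"
proof -
  define d where "d = nat (Max X - Min X) + 1"
  define K where "K = d * nat m"
  have "Min X \<le> Max X"
    using Min_le[OF finite_part[OF X(1)] X(2)] Max_ge[OF finite_part[OF X(1)] X(2)] by linarith
  then have d: "int d = Max X - Min X + 1"
    by (simp add: d_def)
  have "int d \<le> int K"
    using m(2) by (simp add: K_def mult_le_cancel_left1)
  then have K: "int K > Max X - Min X" "int K > 0"
    using d \<open>Min X \<le> Max X\<close> by simp_all
  have "{int (d * nat x) * m} \<in> D"
    by (rule singleton_part_dilate[OF m(1)]) (use X(3) in \<open>simp add: d_def\<close>)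
  moreover have "int (d * nat x) * m = int K * x"
    using m(2) X(3) by (simp add: K_def)
  ultimately have "part (int K * x) = {int K * x}"
    using part_eq[OF _ singletonI] by simp
  moreover have "part (int K * y) = part (int K * x)" if "y \<in> X" for y
    using part_dilate_eq_part_dilate_Max[OF X(1) that K(1)]
      part_dilate_eq_part_dilate_Max[OF X(1) X(2) K(1)] by simp
  ultimately have "y = x" if "y \<in> X" for y
    using that in_part[of "int K * y"] K(2) by simp
  then show ?thesis
    using X(2) by blast
qed

theorem part_containing_1:
  assumes C: "C \<in> D" "1 \<in> C"
  shows "C = {1} \<or> C = {1, -1}"
proof -
  obtain c where C_eq: "C = {1, c}"
    using part_eq_pair[OF C] .
  show ?thesis
  proof (rule ccontr)
    assume contra: "\<not> (C = {1} \<or> C = {1, -1})"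
    then have "c \<noteq> 1" "c \<noteq> -1"
      unfolding C_eq by auto
    moreover have "c \<noteq> 0"
      using C C_eq part_unique[OF C(1) _ zero_part] by auto
    ultimately have "{1 + c} \<in> D"
      using singleton_part_sum[of 1 c] C(1) C_eq by simp
    moreover have "\<bar>1 + c\<bar> > 0"
      using \<open>c \<noteq> -1\<close> by simp
    ultimately have "C = {1}"
      using part_eq_singleton_of_pos_singleton[OF abs_singleton_part _ C] by simp
    then show False
      using C_eq \<open>c \<noteq> 1\<close> by auto
  qed
qed

end

text \<open>Characteristic zero makes of_nat injective, so equal coefficients of a product of class
  sums are equal counts.\<close>
lemma schur_partition_imp_int_schur_partition:
  assumes S: "schur_partition TYPE('a::field_char_0) D"
  shows "int_schur_partition D"
proof
  show "finite X" "X \<noteq> {}" if "X \<in> D" for X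
    using S that unfolding schur_partition_def by simp_all
  show "\<Union>D = UNIV" "{0} \<in> D"
    using S unfolding schur_partition_def by simp_all
  show "X \<inter> Y = {}" if "X \<in> D" "Y \<in> D" "X \<noteq> Y" for X Y
    using S that unfolding schur_partition_def by blast
  show "uminus ` X \<in> D" if "X \<in> D" for X
    using S that unfolding schur_partition_def by blast
  show "constant_on_parts D (pair_count X Y)" if XY: "X \<in> D" "Y \<in> D" for X Y
    unfolding constant_on_parts_def
  proof (intro ballI)
    fix Z g g' assume Z: "Z \<in> D" "g \<in> Z" "g' \<in> Z"
    obtain lam :: "int set \<Rightarrow> 'a" where lam:
      "class_prod X Y = (\<lambda>g. \<Sum>E\<in>{E \<in> D. lam E \<noteq> 0}. lam E * class_sum E g)"
      using S XY unfolding schur_partition_def by blast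
    have disjoint: "\<forall>E\<in>D. \<forall>E'\<in>D. E \<noteq> E' \<longrightarrow> E \<inter> E' = {}"
      using S unfolding schur_partition_def by blast
    have "g \<in> E \<longleftrightarrow> g' \<in> E" if "E \<in> D" for E
      using disjoint Z that by blast
    then have "class_sum E g = (class_sum E g' :: 'a)" if "E \<in> D" for E
      using that by (simp add: class_sum_def)
    then have "(class_prod X Y g :: 'a) = class_prod X Y g'"
      unfolding lam by (intro sum.cong) auto
    then show "pair_count X Y g = pair_count X Y g'"
      by (simp add: class_prod_def pair_count_def)
  qed
qed

theorem lemma3p1:
  fixes \<D> :: "int set set" and C :: "int set"
  assumes "schur_partition TYPE('a::field_char_0) \<D>"
    and "C \<in> \<D>"
    and "1 \<in> C"
  shows "C = {1} \<or> C = {1, -1}"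
  using int_schur_partition.part_containing_1[OF schur_partition_imp_int_schur_partition[OF assms(1)]]
    assms(2,3) .

end
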